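(* The two-dimensional subalgebras of ${\rm A}_5$ are exactly $\langle e_1,e_2\rangle$, $\langle e_1\pm e_3,e_2\rangle$ and $\langle e_1,\alpha e_2+e_3\rangle$ ($\alpha\in\mathbb{C}$). Up to automorphisms of ${\rm A}_5$, every two-dimensional subalgebra is equivalent to one of $\langle e_1,e_2\rangle$, $\langle e_1+e_3,e_2\rangle$, $\langle e_1-e_3,e_2\rangle$, $\langle e_1,e_3\rangle$.
   Context: ${\rm A}_5$ is the complex algebra with basis $e_1,e_2,e_3$, unit $e_1$ ($e_1e_i=e_ie_1=e_i$), $e_2e_3=e_2$, $e_3e_2=-e_2$, $e_3e_3=e_1$; all other products of basis elements are zero. A subalgebra is a linear subspace closed under multiplication (it need not contain $e_1$). Equivalence up to automorphisms means one is mapped onto the other by an algebra automorphism. $\langle S\rangle$ denotes linear span. *)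

theory Defs
  imports "HOL-Analysis.Analysis"
begin

text \<open>Elements of A5: triples (a,b,c) standing for a e1 + b e2 + c e3 over the complex numbers.\<close>
type_synonym a5 = "complex \<times> complex \<times> complex"

definition a5_scale :: "complex \<Rightarrow> a5 \<Rightarrow> a5" where
  "a5_scale k x = (k * fst x, k * fst (snd x), k * snd (snd x))"

definition e1 :: a5 where "e1 = (1, 0, 0)"
definition e2 :: a5 where "e2 = (0, 1, 0)"
definition e3 :: a5 where "e3 = (0, 0, 1)"

text \<open>Bilinear product: e1 unit, e2 e3 = e2, e3 e2 = -e2, e3 e3 = e1, all other products zero.\<close>
definition a5_mult :: "a5 \<Rightarrow> a5 \<Rightarrow> a5" where
  "a5_mult x y = (case x of (a, b, c) \<Rightarrow> case y of (a', b', c') \<Rightarrow>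
      (a * a' + c * c', a * b' + b * a' + b * c' - c * b', a * c' + c * a'))"

definition a5_span :: "a5 set \<Rightarrow> a5 set" where
  "a5_span S = module.span a5_scale S"

definition a5_subalgebra :: "a5 set \<Rightarrow> bool" where
  "a5_subalgebra S \<longleftrightarrow> module.subspace a5_scale S \<and>
     (\<forall>x\<in>S. \<forall>y\<in>S. a5_mult x y \<in> S)"

definition a5_dim :: "a5 set \<Rightarrow> nat" where
  "a5_dim S = vector_space.dim a5_scale S"

definition a5_automorphism :: "(a5 \<Rightarrow> a5) \<Rightarrow> bool" where
  "a5_automorphism \<phi> \<longleftrightarrow> Vector_Spaces.linear a5_scale a5_scale \<phi> \<and> bij \<phi> \<and>
     (\<forall>x y. \<phi> (a5_mult x y) = a5_mult (\<phi> x) (\<phi> y))"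

end

theory Submission
  imports Defs
begin

text \<open>A two-dimensional subspace of \<open>A\<^sub>5 = \<complex>\<^sup>3\<close> is the plane \<open>p \<bullet> x = 0\<close> orthogonal to
  the cross product \<open>p\<close> of a basis. Multiplicative closure fails already for the square of a
  suitable element of the plane unless \<open>p\<close> is proportional to \<open>(0,0,1)\<close>, \<open>(\<mp>1,0,1)\<close> or
  \<open>(0,-1,\<alpha>)\<close>; these are the listed planes, and each of them is closed. The shear fixing
  \<open>e\<^sub>1, e\<^sub>2\<close> and sending \<open>e\<^sub>3\<close> to \<open>e\<^sub>3 - \<alpha> e\<^sub>2\<close> is an automorphism carrying
  \<open>\<langle>e\<^sub>1, \<alpha> e\<^sub>2 + e\<^sub>3\<rangle>\<close> onto \<open>\<langle>e\<^sub>1, e\<^sub>3\<rangle>\<close>.\<close>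

lemma a5_vector_space: "vector_space a5_scale"
  by unfold_locales (auto simp: a5_scale_def algebra_simps)

interpretation A: vector_space a5_scale by (rule a5_vector_space)

definition a5_dot :: "a5 \<Rightarrow> a5 \<Rightarrow> complex" where
  "a5_dot p x = fst p * fst x + fst (snd p) * fst (snd x) + snd (snd p) * snd (snd x)"

definition a5_cross :: "a5 \<Rightarrow> a5 \<Rightarrow> a5" where
  "a5_cross u v = (fst (snd u) * snd (snd v) - snd (snd u) * fst (snd v),
                   snd (snd u) * fst v - fst u * snd (snd v),
                   fst u * fst (snd v) - fst (snd u) * fst v)"

definition a5_hyperplane :: "a5 \<Rightarrow> a5 set" where
  "a5_hyperplane p = {x. a5_dot p x = 0}"

lemma a5_dot_nonzero_witness:
  assumes "p \<noteq> 0" obtains w where "a5_dot p w \<noteq> 0"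
proof -
  have "a5_dot p e1 \<noteq> 0 \<or> a5_dot p e2 \<noteq> 0 \<or> a5_dot p e3 \<noteq> 0"
    using assms by (cases p) (simp add: a5_dot_def e1_def e2_def e3_def zero_prod_def)
  then show ?thesis using that by blast
qed

lemma a5_cross_cross:
  "a5_cross w (a5_cross u v) = a5_scale (a5_dot v w) u - a5_scale (a5_dot u w) v"
  by (simp add: a5_cross_def a5_dot_def a5_scale_def algebra_simps)

lemma a5_cramer:
  "a5_scale (a5_dot (a5_cross u v) w) x =
     a5_scale (a5_dot (a5_cross v w) x) u + a5_scale (a5_dot (a5_cross w u) x) v
     + a5_scale (a5_dot (a5_cross u v) x) w"
  by (simp add: a5_cross_def a5_dot_def a5_scale_def algebra_simps)

lemma a5_cross_eq_0_iff: "a5_cross u v = 0 \<longleftrightarrow> v = 0 \<or> (\<exists>k. u = a5_scale k v)"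
proof
  assume uv: "a5_cross u v = 0"
  show "v = 0 \<or> (\<exists>k. u = a5_scale k v)"
  proof (cases "v = 0")
    case False
    then obtain w where w: "a5_dot v w \<noteq> 0" by (rule a5_dot_nonzero_witness)
    have "a5_scale (a5_dot v w) u - a5_scale (a5_dot u w) v = 0"
      using a5_cross_cross[of w u v] uv by (simp add: a5_cross_def zero_prod_def)
    then have "a5_scale (a5_dot v w) u = a5_scale (a5_dot u w) v" by simp
    then have "u = a5_scale (a5_dot u w / a5_dot v w) v"
      using w by (metis A.scale_one A.scale_scale divide_inverse_commute right_inverse)
    then show ?thesis by blast
  qed simp
qed (auto simp: a5_cross_def a5_scale_def zero_prod_def algebra_simps)

lemma a5_span_pair: "A.span {u, v} = {a5_scale s u + a5_scale t v | s t. True}"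
  by (auto simp: A.span_insert A.span_singleton algebra_simps)

lemma a5_independent_pair_iff:
  assumes "u \<noteq> v" shows "A.independent {u, v} \<longleftrightarrow> a5_cross u v \<noteq> 0"
  using assms by (auto simp: A.independent_insert A.span_singleton a5_cross_eq_0_iff)

lemma a5_span_pair_eq_hyperplane:
  assumes p: "a5_cross u v \<noteq> 0"
  shows "A.span {u, v} = a5_hyperplane (a5_cross u v)"
proof
  show "A.span {u, v} \<subseteq> a5_hyperplane (a5_cross u v)"
    by (auto simp: a5_span_pair a5_hyperplane_def a5_dot_def a5_cross_def a5_scale_def algebra_simps)
  show "a5_hyperplane (a5_cross u v) \<subseteq> A.span {u, v}"
  proof
    fix x assume "x \<in> a5_hyperplane (a5_cross u v)"
    then have x: "a5_dot (a5_cross u v) x = 0" by (simp add: a5_hyperplane_def)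
    obtain w where w: "a5_dot (a5_cross u v) w \<noteq> 0" using p by (rule a5_dot_nonzero_witness)
    define d where "d = a5_dot (a5_cross u v) w"
    have "a5_scale d x = a5_scale (a5_dot (a5_cross v w) x) u + a5_scale (a5_dot (a5_cross w u) x) v"
      using a5_cramer[of u v w x] x by (simp add: d_def a5_scale_def zero_prod_def)
    then have "x = a5_scale (a5_dot (a5_cross v w) x / d) u + a5_scale (a5_dot (a5_cross w u) x / d) v"
      using w A.scale_scale[of "1 / d" d x]
      by (simp add: d_def A.scale_right_distrib A.scale_scale flip: divide_inverse_commute)
    then show "x \<in> A.span {u, v}" by (auto simp: a5_span_pair)
  qed
qed

lemma a5_dim_span_pair:
  assumes p: "a5_cross u v \<noteq> 0" shows "a5_dim (a5_span {u, v}) = 2"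
proof -
  have "u \<noteq> v" using p by (auto simp: a5_cross_def zero_prod_def)
  with p have "A.independent {u, v}" by (simp add: a5_independent_pair_iff)
  with \<open>u \<noteq> v\<close> show ?thesis
    by (simp add: a5_dim_def a5_span_def A.dim_span A.dim_eq_card_independent)
qed

lemma a5_two_dim_subspace_eq_hyperplane:
  assumes "A.subspace S" "a5_dim S = 2"
  obtains p where "p \<noteq> 0" "S = a5_hyperplane p"
proof -
  obtain B where B: "B \<subseteq> S" "A.independent B" "S \<subseteq> A.span B" "card B = A.dim S"
    by (rule A.basis_exists)
  then obtain u v where uv: "B = {u, v}" "u \<noteq> v"
    using assms(2) by (auto simp: a5_dim_def card_2_iff)
  have "S = A.span {u, v}" using A.span_subspace[OF B(1) B(3) assms(1)] uv by simp
  moreover have "a5_cross u v \<noteq> 0" using B(2) uv by (simp add: a5_independent_pair_iff)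
  ultimately show ?thesis using that a5_span_pair_eq_hyperplane by blast
qed

lemma a5_dot_scale: "a5_dot (a5_scale k p) x = k * a5_dot p x"
  by (simp add: a5_dot_def a5_scale_def algebra_simps)

lemma a5_hyperplane_scale: "k \<noteq> 0 \<Longrightarrow> a5_hyperplane (a5_scale k p) = a5_hyperplane p"
  by (simp add: a5_hyperplane_def a5_dot_scale)

lemma a5_hyperplane_mult_closed_cases:
  assumes "p \<noteq> 0"
    and closed: "\<forall>x\<in>a5_hyperplane p. \<forall>y\<in>a5_hyperplane p. a5_mult x y \<in> a5_hyperplane p"
  shows "a5_hyperplane p = a5_hyperplane (0, 0, 1) \<or> a5_hyperplane p = a5_hyperplane (-1, 0, 1) \<or>
         a5_hyperplane p = a5_hyperplane (1, 0, 1) \<or> (\<exists>\<alpha>. a5_hyperplane p = a5_hyperplane (0, -1, \<alpha>))"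
proof -
  obtain p1 p2 p3 where p: "p = (p1, p2, p3)" by (cases p)
  have square_closed: "x \<in> a5_hyperplane p \<Longrightarrow> a5_dot p (a5_mult x x) = 0" for x
    using closed unfolding a5_hyperplane_def by blast
  show ?thesis
  proof (cases "p2 = 0")
    case False
    have "a5_dot p (a5_mult (p2, -p1, 0) (p2, -p1, 0)) = 0"
      by (rule square_closed) (simp add: a5_hyperplane_def a5_dot_def p algebra_simps)
    then have "p1 = 0" using False by (simp add: a5_dot_def a5_mult_def p algebra_simps)
    then have "p = a5_scale (- p2) (0, -1, - p3 / p2)" using False by (simp add: p a5_scale_def)
    then show ?thesis using False a5_hyperplane_scale by (metis neg_equal_0_iff_equal)
  next
    case True
    have "a5_dot p (a5_mult (p3, 0, -p1) (p3, 0, -p1)) = 0"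
      by (rule square_closed) (simp add: a5_hyperplane_def a5_dot_def p True algebra_simps)
    then have "p1 * (p1 - p3) * (p1 + p3) = 0"
      using True by (simp add: a5_dot_def a5_mult_def p algebra_simps)
    then have "p1 = 0 * p3 \<or> p1 = 1 * p3 \<or> p1 = -1 * p3"
      by (simp add: add_eq_0_iff) (metis minus_equation_iff)
    then obtain \<epsilon> :: complex where \<epsilon>: "\<epsilon> \<in> {0, 1, -1}" "p1 = \<epsilon> * p3" by blast
    then have "p = a5_scale p3 (\<epsilon>, 0, 1)" and "p3 \<noteq> 0"
      using True \<open>p \<noteq> 0\<close> by (auto simp: p a5_scale_def zero_prod_def)
    then have "a5_hyperplane p = a5_hyperplane (\<epsilon>, 0, 1)" using a5_hyperplane_scale by simp
    with \<epsilon>(1) show ?thesis by auto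
  qed
qed

lemma a5_hyperplane_mult_closed:
  assumes "q \<in> {(0, 0, 1), (-1, 0, 1), (1, 0, 1), (0, -1, \<alpha>)}"
  shows "\<forall>x\<in>a5_hyperplane q. \<forall>y\<in>a5_hyperplane q. a5_mult x y \<in> a5_hyperplane q"
proof -
  have "q = (1, 0, 1) \<or> q \<in> {(0, 0, 1), (-1, 0, 1), (0, -1, \<alpha>)}" using assms by blast
  then show ?thesis
  proof
    assume "q = (1, 0, 1)"
    then show ?thesis by (auto simp: a5_hyperplane_def a5_dot_def a5_mult_def add_eq_0_iff)
  qed (auto simp: a5_hyperplane_def a5_dot_def a5_mult_def algebra_simps)
qed

lemma a5_cross_normal_forms:
  "a5_cross e1 e2 = (0, 0, 1)" "a5_cross (e1 + e3) e2 = (-1, 0, 1)"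
  "a5_cross (e1 - e3) e2 = (1, 0, 1)" "a5_cross e1 (a5_scale \<alpha> e2 + e3) = (0, -1, \<alpha>)"
  by (simp_all add: a5_cross_def e1_def e2_def e3_def a5_scale_def)

lemma a5_two_dim_subalgebra_iff:
  "a5_subalgebra S \<and> a5_dim S = 2 \<longleftrightarrow>
     S = a5_span {e1, e2} \<or> S = a5_span {e1 + e3, e2} \<or> S = a5_span {e1 - e3, e2} \<or>
     (\<exists>\<alpha>. S = a5_span {e1, a5_scale \<alpha> e2 + e3})"
proof
  assume S: "a5_subalgebra S \<and> a5_dim S = 2"
  then obtain p where "p \<noteq> 0" and p: "S = a5_hyperplane p"
    by (auto simp: a5_subalgebra_def elim: a5_two_dim_subspace_eq_hyperplane)
  moreover have "\<forall>x\<in>a5_hyperplane p. \<forall>y\<in>a5_hyperplane p. a5_mult x y \<in> a5_hyperplane p"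
    using S p by (simp add: a5_subalgebra_def)
  ultimately show "S = a5_span {e1, e2} \<or> S = a5_span {e1 + e3, e2} \<or> S = a5_span {e1 - e3, e2} \<or>
     (\<exists>\<alpha>. S = a5_span {e1, a5_scale \<alpha> e2 + e3})"
    using a5_hyperplane_mult_closed_cases
    by (simp add: a5_span_def a5_span_pair_eq_hyperplane a5_cross_normal_forms zero_prod_def)
next
  assume "S = a5_span {e1, e2} \<or> S = a5_span {e1 + e3, e2} \<or> S = a5_span {e1 - e3, e2} \<or>
     (\<exists>\<alpha>. S = a5_span {e1, a5_scale \<alpha> e2 + e3})"
  then obtain u v \<alpha> where S: "S = a5_span {u, v}"
    and q: "a5_cross u v \<in> {(0, 0, 1), (-1, 0, 1), (1, 0, 1), (0, -1, \<alpha>)}"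
    using a5_cross_normal_forms by blast
  then have uv: "a5_cross u v \<noteq> 0" by (auto simp: zero_prod_def)
  have "S = a5_hyperplane (a5_cross u v)" using S uv by (simp add: a5_span_def a5_span_pair_eq_hyperplane)
  moreover have "a5_dim S = 2" using S uv by (simp add: a5_dim_span_pair)
  moreover have "A.subspace S" by (simp add: S a5_span_def A.subspace_span)
  ultimately show "a5_subalgebra S \<and> a5_dim S = 2"
    using a5_hyperplane_mult_closed[OF q] by (simp add: a5_subalgebra_def)
qed

definition a5_shear :: "complex \<Rightarrow> a5 \<Rightarrow> a5" where
  "a5_shear \<alpha> x = (fst x, fst (snd x) - \<alpha> * snd (snd x), snd (snd x))"

lemma a5_linear_shear: "Vector_Spaces.linear a5_scale a5_scale (a5_shear \<alpha>)"
  using a5_vector_space by (simp add: Vector_Spaces.linear_iff a5_shear_def a5_scale_def algebra_simps)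

lemma a5_automorphism_shear: "a5_automorphism (a5_shear \<alpha>)"
proof -
  have "a5_shear (-\<alpha>) \<circ> a5_shear \<alpha> = id" "a5_shear \<alpha> \<circ> a5_shear (-\<alpha>) = id"
    by (auto simp: a5_shear_def fun_eq_iff)
  then have "bij (a5_shear \<alpha>)" by (rule o_bij)
  moreover have "a5_shear \<alpha> (a5_mult x y) = a5_mult (a5_shear \<alpha> x) (a5_shear \<alpha> y)" for x y
    by (cases x, cases y) (simp add: a5_shear_def a5_mult_def algebra_simps)
  ultimately show ?thesis using a5_linear_shear by (simp add: a5_automorphism_def)
qed

lemma a5_shear_image_span:
  "a5_shear \<alpha> ` a5_span {e1, a5_scale \<alpha> e2 + e3} = a5_span {e1, e3}"
proof -
  have "a5_shear \<alpha> ` a5_span {e1, a5_scale \<alpha> e2 + e3} =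
        a5_span (a5_shear \<alpha> ` {e1, a5_scale \<alpha> e2 + e3})"
    unfolding a5_span_def
    by (rule module_hom.span_image[symmetric]) (simp add: module_hom_iff_linear a5_linear_shear)
  also have "a5_shear \<alpha> ` {e1, a5_scale \<alpha> e2 + e3} = {e1, e3}"
    by (simp add: a5_shear_def e1_def e2_def e3_def a5_scale_def)
  finally show ?thesis .
qed

theorem mainTheorem13:
  shows "(\<forall>S. (a5_subalgebra S \<and> a5_dim S = 2) \<longleftrightarrow>
            (S = a5_span {e1, e2} \<or> S = a5_span {e1 + e3, e2} \<or> S = a5_span {e1 - e3, e2} \<or>
             (\<exists>\<alpha>::complex. S = a5_span {e1, a5_scale \<alpha> e2 + e3})))
       \<and> (\<forall>S. a5_subalgebra S \<and> a5_dim S = 2 \<longrightarrow>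
            (\<exists>\<phi>. a5_automorphism \<phi> \<and>
               (\<phi> ` S = a5_span {e1, e2} \<or> \<phi> ` S = a5_span {e1 + e3, e2} \<or>
                \<phi> ` S = a5_span {e1 - e3, e2} \<or> \<phi> ` S = a5_span {e1, e3})))"
proof (intro conjI allI impI)
  show "a5_subalgebra S \<and> a5_dim S = 2 \<longleftrightarrow>
          S = a5_span {e1, e2} \<or> S = a5_span {e1 + e3, e2} \<or> S = a5_span {e1 - e3, e2} \<or>
          (\<exists>\<alpha>. S = a5_span {e1, a5_scale \<alpha> e2 + e3})" for S
    by (rule a5_two_dim_subalgebra_iff)
  fix S assume "a5_subalgebra S \<and> a5_dim S = 2"
  then consider "S = a5_span {e1, e2} \<or> S = a5_span {e1 + e3, e2} \<or> S = a5_span {e1 - e3, e2}"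
    | \<alpha> where "S = a5_span {e1, a5_scale \<alpha> e2 + e3}"
    by (auto simp: a5_two_dim_subalgebra_iff)
  then show "\<exists>\<phi>. a5_automorphism \<phi> \<and>
               (\<phi> ` S = a5_span {e1, e2} \<or> \<phi> ` S = a5_span {e1 + e3, e2} \<or>
                \<phi> ` S = a5_span {e1 - e3, e2} \<or> \<phi> ` S = a5_span {e1, e3})"
  proof cases
    case 1
    moreover have "a5_automorphism id" by (simp add: a5_automorphism_def A.linear_id)
    ultimately show ?thesis by auto
  next
    case (2 \<alpha>)
    then show ?thesis using a5_automorphism_shear a5_shear_image_span by blast
  qed
qed

end
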